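(* Let $K\subset\mathbb{R}^2$ be the infinitely generated self-similar set defined in the context. Then $K$ has positive two-dimensional Lebesgue measure and empty interior. Moreover, for Lebesgue almost every $y\in[0,1]$ the horizontal fibre $K_y:=\{x\in\mathbb{R}:(x,y)\in K\}$ contains a nontrivial interval.
   Context: For $k\ge 0$ and $n\ge 1$ let $t_{k,n}:=\frac{1}{2^k n}$. Define the similarities of $\mathbb{R}^2$: $U(x,y)=\left(\frac{x}{2},\frac{y+1}{2}\right)$, $D_0(x,y)=\left(\frac{x}{2},\frac{y}{2}\right)$, and $D_{k,n}(x,y)=\left(\frac{x+t_{k,n}}{2},\frac{y}{2}\right)$ for $k\ge0,n\ge1$. Let $\Phi$ be this countable family. $K$ is the unique non-empty compact set $K\subset\mathbb{R}^2$ satisfying $K=U(K)\cup D_0(K)\cup\bigcup_{k\ge0,n\ge1}D_{k,n}(K)$. *)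

theory Defs
  imports "HOL-Analysis.Analysis"
begin

definition tkn :: "nat \<Rightarrow> nat \<Rightarrow> real" where
  "tkn k n = 1 / (2 ^ k * real n)"

definition mapU :: "real \<times> real \<Rightarrow> real \<times> real" where
  "mapU p = (fst p / 2, (snd p + 1) / 2)"

definition mapD0 :: "real \<times> real \<Rightarrow> real \<times> real" where
  "mapD0 p = (fst p / 2, snd p / 2)"

definition mapD :: "nat \<Rightarrow> nat \<Rightarrow> real \<times> real \<Rightarrow> real \<times> real" where
  "mapD k n p = ((fst p + tkn k n) / 2, snd p / 2)"

definition hutch :: "(real \<times> real) set \<Rightarrow> (real \<times> real) set" where
  "hutch S = mapU ` S \<union> mapD0 ` S \<union> (\<Union>k. \<Union>n\<in>{1..}. mapD k n ` S)"

definition Kset :: "(real \<times> real) set" where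
  "Kset = (THE K. compact K \<and> K \<noteq> {} \<and> K = hutch K)"

end

theory Submission
  imports Defs
begin

text \<open>
  Each map of the family is \<open>p \<mapsto> midpoint d p\<close> for a digit \<open>d \<in> (T \<times> {0}) \<union> {(0, 1)}\<close>,
  \<open>T = {0} \<union> {1/m | m \<ge> 1}\<close>, so \<open>K\<close> is the set of sums \<open>\<Sum>\<^sub>i 2^-(i+1) d\<^sub>i\<close> over digit sequences.

  If the height \<open>y\<close> of such a point lies just below a dyadic level \<open>(j+1)/2^m\<close>, its vertical
  digits \<open>m, \<dots>, m+n-1\<close> are \<open>1\<close>, hence its horizontal digits there are \<open>0\<close>, and \<open>x\<close> lies within
  \<open>2^-(m+n)\<close> of one of countably many points determined by the first \<open>m\<close> digits. A ball in \<open>K\<close>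
  would thus force an interval into a countable set.

  For the fibres let \<open>H(y) = \<Sum>\<^sub>n 2^-z\<^sub>n(y)\<close>, where \<open>z\<^sub>n(y)\<close> counts the zeros among the first \<open>n\<close>
  binary digits of \<open>y\<close>, and \<open>w(y) = 2^(-1-H(y))\<close>. The region \<open>{(x, y). H(y) < \<infinity>, 0 \<le> x \<le> w(y)}\<close>
  is covered by its own images: above \<open>y = 1/2\<close> under the upper map, below it under a lower map
  whose offset \<open>1/M\<close> approximates \<open>2x\<close> to within \<open>(2x)\<^sup>2\<close>. So the region lies in \<open>K\<close>. Since
  \<open>\<integral>\<^sub>0\<^sup>1 2^-z\<^sub>n = (3/4)^n\<close>, \<open>H\<close> is finite almost everywhere, and Fubini gives positive measure.
\<close>

section \<open>The attractor as a set of digit expansions\<close>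

definition offsets :: "real set" where
  "offsets = insert 0 (range (\<lambda>m::nat. 1 / real (Suc m)))"

definition digits :: "(real \<times> real) set" where
  "digits = insert (0, 1) (offsets \<times> {0})"

lemma tkn_in_offsets: "n \<ge> 1 \<Longrightarrow> tkn k n \<in> offsets"
proof -
  assume "n \<ge> 1"
  then have "2 ^ k * n = Suc (2 ^ k * n - 1)" by simp
  then have "tkn k n = 1 / real (Suc (2 ^ k * n - 1))"
    unfolding tkn_def by (metis of_nat_mult of_nat_numeral of_nat_power)
  then show ?thesis unfolding offsets_def by blast
qed

lemma hutch_eq: "hutch S = (\<lambda>(d, p). midpoint d p) ` (digits \<times> S)"
proof -
  have U: "mapU = midpoint (0, 1)" and D0: "mapD0 = midpoint (0, 0)" and D: "mapD k n = midpoint (tkn k n, 0)" for k n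
    by (auto simp: mapU_def mapD0_def mapD_def midpoint_def inverse_eq_divide fun_eq_iff)
  have offsets_eq: "offsets = insert 0 {tkn k n | k n. n \<ge> 1}"
  proof -
    have "1 / real (Suc m) = tkn 0 (Suc m)" for m by (simp add: tkn_def)
    then show ?thesis using tkn_in_offsets unfolding offsets_def by fastforce
  qed
  show ?thesis
    unfolding hutch_def U D0 D digits_def offsets_eq by (auto simp: image_iff; blast)
qed

lemma mem_hutch_iff: "p \<in> hutch S \<longleftrightarrow> (\<exists>d\<in>digits. \<exists>q\<in>S. p = midpoint d q)"
  unfolding hutch_eq by auto

lemma compact_offsets: "compact offsets"
proof -
  have "(\<lambda>m::nat. 1 / real (Suc m)) \<longlonglongrightarrow> 0"
    using LIMSEQ_Suc[OF lim_inverse_n'] by (simp add: inverse_eq_divide)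
  then show ?thesis unfolding offsets_def by (rule compact_sequence_with_limit)
qed

lemma countable_offsets: "countable offsets"
  unfolding offsets_def by simp

lemma offsets_subset: "offsets \<subseteq> {0..1}"
  unfolding offsets_def by auto

lemma compact_digits: "compact digits"
  unfolding digits_def by (intro compact_insert compact_Times compact_offsets) auto

lemma countable_digits: "countable digits"
  unfolding digits_def by (simp add: countable_offsets)

lemma hutch_mono: "S \<subseteq> S' \<Longrightarrow> hutch S \<subseteq> hutch S'"
  unfolding hutch_eq by blast

lemma compact_hutch: "compact S \<Longrightarrow> compact (hutch S)"
  unfolding hutch_eq
  by (intro compact_continuous_image compact_Times compact_digits)
    (auto simp: midpoint_def case_prod_unfold intro!: continuous_intros)

definition coding :: "(nat \<Rightarrow> real \<times> real) \<Rightarrow> real \<times> real" where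
  "coding s = (\<Sum>i. (1/2) ^ Suc i *\<^sub>R s i)"

definition coded_set :: "(real \<times> real) set" where
  "coded_set = coding ` {s. \<forall>i. s i \<in> digits}"

definition partial_coding :: "nat \<Rightarrow> (nat \<Rightarrow> real \<times> real) \<Rightarrow> real \<times> real \<Rightarrow> real \<times> real" where
  "partial_coding n s q = (\<Sum>i<n. (1/2) ^ Suc i *\<^sub>R s i) + (1/2) ^ n *\<^sub>R q"

lemma summable_coding:
  assumes "\<forall>i. s i \<in> digits"
  shows "summable (\<lambda>i. (1/2::real) ^ Suc i *\<^sub>R s i)"
proof -
  obtain B where B: "\<And>d. d \<in> digits \<Longrightarrow> norm d \<le> B"
    using compact_imp_bounded[OF compact_digits] bounded_iff by blast
  show ?thesis
  proof (rule summable_comparison_test)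
    show "\<exists>N. \<forall>n\<ge>N. norm ((1/2::real) ^ Suc n *\<^sub>R s n) \<le> B * (1/2) ^ Suc n"
      using B assms by (auto intro!: mult_left_mono)
    show "summable (\<lambda>n. B * (1/2::real) ^ Suc n)"
      by (intro summable_mult summable_Suc_iff[THEN iffD2] summable_geometric) simp
  qed
qed

lemma coding_case_nat:
  assumes "d \<in> digits" "\<forall>i. s i \<in> digits"
  shows "coding (case_nat d s) = midpoint d (coding s)"
proof -
  let ?f = "\<lambda>i. (1/2::real) ^ Suc i *\<^sub>R case_nat d s i"
  have "summable ?f" using assms by (intro summable_coding) (simp split: nat.split)
  then have "(\<Sum>i. ?f (Suc i)) = suminf ?f - ?f 0"
    by (rule suminf_split_head)
  then have "coding (case_nat d s) = (\<Sum>i. ?f (Suc i)) + ?f 0"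
    unfolding coding_def by (simp only: eq_diff_eq)
  also have "(\<Sum>i. ?f (Suc i)) = (\<Sum>i. (1/2) *\<^sub>R ((1/2) ^ Suc i *\<^sub>R s i))"
    by (simp add: scaleR_scaleR)
  also have "\<dots> = (1/2) *\<^sub>R coding s"
    unfolding coding_def by (rule suminf_scaleR_right[symmetric, OF summable_coding[OF assms(2)]])
  finally show ?thesis by (simp add: midpoint_def inverse_eq_divide scaleR_add_right)
qed

lemma coding_eq_midpoint_tail:
  assumes "\<forall>i. s i \<in> digits"
  shows "coding s = midpoint (s 0) (coding (\<lambda>i. s (Suc i)))"
proof -
  have "s = case_nat (s 0) (\<lambda>i. s (Suc i))" by (simp add: fun_eq_iff split: nat.split)
  then show ?thesis using coding_case_nat[of "s 0" "\<lambda>i. s (Suc i)"] assms by simp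
qed

lemma partial_coding_Suc: "partial_coding (Suc n) s q = partial_coding n s (midpoint (s n) q)"
  by (simp add: partial_coding_def midpoint_def inverse_eq_divide scaleR_add_right scaleR_scaleR)

lemma coding_split:
  assumes "\<forall>i. s i \<in> digits"
  shows "coding s = partial_coding k s (coding (\<lambda>i. s (i + k)))"
proof (induction k)
  case 0 then show ?case by (simp add: partial_coding_def)
next
  case (Suc k)
  have "coding (\<lambda>i. s (i + k)) = midpoint (s k) (coding (\<lambda>i. s (i + Suc k)))"
    using coding_eq_midpoint_tail[of "\<lambda>i. s (i + k)"] assms by simp
  then show ?case using Suc by (simp add: partial_coding_Suc)
qed

lemma partial_coding_tendsto:
  assumes "\<forall>i. s i \<in> digits" and "bounded B" and "\<And>n. q n \<in> B"
  shows "(\<lambda>n. partial_coding n s (q n)) \<longlonglongrightarrow> coding s"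
proof -
  obtain C where C: "\<And>x. x \<in> B \<Longrightarrow> norm x \<le> C" using assms(2) bounded_iff by blast
  have "(\<lambda>n. (1/2::real) ^ n *\<^sub>R q n) \<longlonglongrightarrow> 0"
  proof (rule Lim_null_comparison)
    show "\<forall>\<^sub>F n in sequentially. norm ((1/2::real) ^ n *\<^sub>R q n) \<le> C * (1/2) ^ n"
      using C assms(3) by (intro always_eventually allI) (simp add: mult.commute mult_left_mono)
    show "(\<lambda>n. C * (1/2::real) ^ n) \<longlonglongrightarrow> 0"
      by (intro tendsto_mult_right_zero LIMSEQ_realpow_zero) auto
  qed
  then have "(\<lambda>n. (\<Sum>i<n. (1/2::real) ^ Suc i *\<^sub>R s i) + (1/2) ^ n *\<^sub>R q n) \<longlonglongrightarrow> coding s + 0"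
    unfolding coding_def by (intro tendsto_add summable_LIMSEQ summable_coding assms(1))
  then show ?thesis by (simp add: partial_coding_def)
qed

text \<open>Every point of \<open>K\<close> has a backward orbit in \<open>K\<close>; the digits along it code the point.\<close>
lemma subset_coded_set:
  assumes "bounded K" and "K \<subseteq> hutch K"
  shows "K \<subseteq> coded_set"
proof
  fix p assume "p \<in> K"
  have "\<forall>q\<in>K. \<exists>z. fst z \<in> digits \<and> snd z \<in> K \<and> q = midpoint (fst z) (snd z)"
  proof
    fix q assume "q \<in> K"
    obtain d q' where "d \<in> digits" "q' \<in> K" "q = midpoint d q'"
      using assms(2) \<open>q \<in> K\<close> mem_hutch_iff by blast
    then show "\<exists>z. fst z \<in> digits \<and> snd z \<in> K \<and> q = midpoint (fst z) (snd z)"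
      by (intro exI[of _ "(d, q')"]) simp
  qed
  from bchoice[OF this] obtain prev
    where "\<forall>q\<in>K. fst (prev q) \<in> digits \<and> snd (prev q) \<in> K \<and> q = midpoint (fst (prev q)) (snd (prev q))"
    by blast
  then have prev: "\<And>q. q \<in> K \<Longrightarrow> fst (prev q) \<in> digits \<and> snd (prev q) \<in> K \<and> q = midpoint (fst (prev q)) (snd (prev q))"
    by blast
  define orbit where "orbit n = ((snd \<circ> prev) ^^ n) p" for n
  define s where "s n = fst (prev (orbit n))" for n
  have orbit_Suc: "orbit (Suc n) = snd (prev (orbit n))" for n
    by (simp add: orbit_def)
  have orbit_in: "orbit n \<in> K" for n
  proof (induction n)
    case 0 show ?case using \<open>p \<in> K\<close> by (simp add: orbit_def)
  next
    case (Suc n) then show ?case using prev by (simp add: orbit_Suc)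
  qed
  have s: "\<forall>i. s i \<in> digits" using prev orbit_in by (simp add: s_def)
  have "partial_coding n s (orbit n) = p" for n
  proof (induction n)
    case 0 show ?case by (simp add: partial_coding_def orbit_def)
  next
    case (Suc n)
    have "orbit n = midpoint (s n) (orbit (Suc n))"
      using prev[OF orbit_in[of n]] by (simp add: s_def orbit_Suc)
    then show ?case using Suc by (simp add: partial_coding_Suc)
  qed
  then have "(\<lambda>n. p) \<longlonglongrightarrow> coding s"
    using partial_coding_tendsto[OF s assms(1), of orbit] orbit_in by simp
  then have "p = coding s" by (rule LIMSEQ_const_iff[THEN iffD1])
  then show "p \<in> coded_set" using s unfolding coded_set_def by blast
qed

lemma coded_set_subset:
  assumes "closed K" and "hutch K \<subseteq> K" and "K \<noteq> {}"
  shows "coded_set \<subseteq> K"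
proof
  fix p assume "p \<in> coded_set"
  then obtain s where s: "\<forall>i. s i \<in> digits" and p: "p = coding s" unfolding coded_set_def by blast
  obtain q where q: "q \<in> K" using assms(3) by blast
  have midpoint_in: "midpoint (s n) q \<in> K" if "q \<in> K" for n q
    using assms(2) s that mem_hutch_iff by blast
  have "\<forall>q\<in>K. partial_coding n s q \<in> K" for n
    by (induction n) (simp_all add: partial_coding_def[of 0] partial_coding_Suc midpoint_in)
  then have "\<And>n. partial_coding n s q \<in> K" using q by blast
  moreover have "(\<lambda>n. partial_coding n s q) \<longlonglongrightarrow> coding s"
    using partial_coding_tendsto[OF s, of "{q}"] by simp
  ultimately show "p \<in> K" unfolding p by (rule closed_sequentially[OF assms(1)])
qed

lemma hutch_coded_set: "hutch coded_set = coded_set"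
proof
  show "hutch coded_set \<subseteq> coded_set"
  proof
    fix p assume "p \<in> hutch coded_set"
    then obtain d s where "d \<in> digits" "\<forall>i. s i \<in> digits" "p = midpoint d (coding s)"
      unfolding mem_hutch_iff coded_set_def by blast
    then have "p = coding (case_nat d s)" "\<forall>i. case_nat d s i \<in> digits"
      by (simp_all add: coding_case_nat split: nat.split)
    then show "p \<in> coded_set" unfolding coded_set_def by blast
  qed
  show "coded_set \<subseteq> hutch coded_set"
  proof
    fix p assume "p \<in> coded_set"
    then obtain s where s: "\<forall>i. s i \<in> digits" and p: "p = coding s" unfolding coded_set_def by blast
    have "p = midpoint (s 0) (coding (\<lambda>i. s (Suc i)))" unfolding p using s by (rule coding_eq_midpoint_tail)
    moreover have "coding (\<lambda>i. s (Suc i)) \<in> coded_set" using s unfolding coded_set_def by blast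
    ultimately show "p \<in> hutch coded_set" using s mem_hutch_iff by blast
  qed
qed

lemma coded_set_subset_unit_square: "coded_set \<subseteq> {0..1} \<times> {0..1}"
proof (rule coded_set_subset)
  show "hutch ({0..1} \<times> {0..1}) \<subseteq> {0..1} \<times> {0..1}"
    using offsets_subset by (auto simp: mem_hutch_iff digits_def midpoint_def inverse_eq_divide subset_iff)
qed (auto intro: closed_Times)

text \<open>\<open>hutch (closure C)\<close> is closed and contains \<open>hutch C = C\<close>, so the bounded set \<open>closure C\<close>
  lies in its own image and therefore in \<open>C\<close>.\<close>
lemma compact_coded_set: "compact coded_set"
proof -
  have bounded: "bounded coded_set"
    using coded_set_subset_unit_square by (rule bounded_subset[rotated]) (intro bounded_Times bounded_closed_interval)
  have "coded_set \<subseteq> hutch (closure coded_set)"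
    using hutch_mono[OF closure_subset] hutch_coded_set by blast
  moreover have "closed (hutch (closure coded_set))"
    using bounded by (intro compact_imp_closed compact_hutch) (simp add: compact_closure)
  ultimately have "closure coded_set \<subseteq> hutch (closure coded_set)"
    by (rule closure_minimal)
  then have "closure coded_set \<subseteq> coded_set"
    using bounded by (intro subset_coded_set) auto
  then show ?thesis
    using bounded closure_subset_eq by (auto simp: compact_eq_bounded_closed)
qed

lemma Kset_eq_coded_set: "Kset = coded_set"
  unfolding Kset_def
proof (rule the_equality)
  show "compact coded_set \<and> coded_set \<noteq> {} \<and> coded_set = hutch coded_set"
    using compact_coded_set hutch_coded_set by (auto simp: coded_set_def digits_def)
  fix K assume K: "compact K \<and> K \<noteq> {} \<and> K = hutch K"
  then show "K = coded_set"
    using subset_coded_set[of K] coded_set_subset[of K] by (auto simp: compact_imp_bounded compact_imp_closed)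
qed

section \<open>Empty interior\<close>

lemma digits_cases:
  assumes "d \<in> digits"
  obtains "d = (0, 1)" | "snd d = 0" "0 \<le> fst d" "fst d \<le> 1"
  using assms offsets_subset unfolding digits_def by force

lemma partial_coding_Suc_0: "partial_coding (Suc k) s 0 = partial_coding k s 0 + (1/2) ^ Suc k *\<^sub>R s k"
  by (simp add: partial_coding_def)

lemma coding_eq_partial_coding:
  assumes "\<forall>i. s i \<in> digits"
  obtains t where "t \<in> {0..1} \<times> {0..1}" "coding s = partial_coding k s 0 + (1/2) ^ k *\<^sub>R t"
proof
  have "coding (\<lambda>i. s (i + k)) \<in> coded_set"
    unfolding coded_set_def using assms by (intro imageI) simp
  then show "coding (\<lambda>i. s (i + k)) \<in> {0..1} \<times> {0..1}"
    using coded_set_subset_unit_square by (rule subsetD[rotated])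
  have "coding s = partial_coding k s (coding (\<lambda>i. s (i + k)))"
    by (rule coding_split[OF assms])
  then show "coding s = partial_coding k s 0 + (1/2) ^ k *\<^sub>R coding (\<lambda>i. s (i + k))"
    by (simp add: partial_coding_def)
qed

text \<open>The integer whose binary digits are the first \<open>k\<close> vertical digits of \<open>s\<close>.\<close>
definition height :: "(nat \<Rightarrow> real \<times> real) \<Rightarrow> nat \<Rightarrow> real" where
  "height s k = snd (partial_coding k s 0) * 2 ^ k"

lemma height_Suc: "height s (Suc k) = 2 * height s k + snd (s k)"
  by (simp add: height_def partial_coding_Suc_0 algebra_simps power_one_over)

lemma height_in_Ints:
  assumes "\<forall>i. s i \<in> digits"
  shows "height s k \<in> \<int>"
proof (induction k)
  case (Suc k)
  have "snd (s k) \<in> \<int>" using assms by (metis digits_cases Ints_0 Ints_1 snd_conv)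
  then show ?case using Suc by (simp add: height_Suc)
qed (simp add: height_def partial_coding_def)

lemma height_eq_floor:
  fixes A :: int
  assumes s: "\<forall>i. s i \<in> digits"
    and "A < snd (coding s) * 2 ^ k" "snd (coding s) * 2 ^ k < A + 1"
  shows "height s k = A"
proof -
  obtain t where t: "t \<in> {0..1} \<times> {0..1}" and eq: "coding s = partial_coding k s 0 + (1/2) ^ k *\<^sub>R t"
    using coding_eq_partial_coding[OF s] .
  have "snd (coding s) * 2 ^ k = height s k + snd t"
    unfolding eq height_def by (simp add: algebra_simps power_one_over)
  moreover obtain h where "height s k = of_int h"
    using height_in_Ints[OF s] Ints_cases by metis
  ultimately show ?thesis using assms t by (auto simp: mem_Times_iff)
qed

lemma snd_digit_bounds: "d \<in> digits \<Longrightarrow> 0 \<le> snd d \<and> snd d \<le> 1"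
  by (cases rule: digits_cases) auto

lemma height_growth:
  assumes "\<forall>i. s i \<in> digits"
  shows "height s (m + n) + 1 \<le> 2 ^ n * (height s m + 1)"
proof (induction n)
  case (Suc n)
  have "height s (m + Suc n) + 1 \<le> 2 * (height s (m + n) + 1)"
    using snd_digit_bounds[of "s (m + n)"] assms by (simp add: height_Suc)
  then show ?case using Suc by simp
qed simp

lemma height_growth_eq:
  assumes "\<forall>i. s i \<in> digits" and "height s (m + n) + 1 = 2 ^ n * (height s m + 1)"
  shows "\<forall>i\<in>{m..<m + n}. snd (s i) = 1"
  using assms(2)
proof (induction n)
  case (Suc n)
  have b: "snd (s (m + n)) \<le> 1" using snd_digit_bounds[of "s (m + n)"] assms(1) by simp
  have "height s (m + n) + 1 \<le> 2 ^ n * (height s m + 1)" by (rule height_growth[OF assms(1)])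
  moreover have "height s (m + Suc n) + 1 = 2 * (height s (m + n) + 1) - (1 - snd (s (m + n)))"
    by (simp add: height_Suc)
  ultimately have "snd (s (m + n)) = 1" "height s (m + n) + 1 = 2 ^ n * (height s m + 1)"
    using Suc.prems b by simp_all
  then show ?case using Suc.IH by (auto simp: less_Suc_eq)
qed simp

lemma fst_partial_coding_eq:
  assumes "\<forall>i. s i \<in> digits" and "\<forall>i\<in>{m..<m + n}. snd (s i) = 1"
  shows "fst (partial_coding (m + n) s 0) = fst (partial_coding m s 0)"
  using assms(2)
proof (induction n)
  case (Suc n)
  then have "snd (s (m + n)) = 1" by simp
  then have "fst (s (m + n)) = 0" using assms(1) digits_cases[of "s (m + n)"] by force
  then show ?case using Suc by (simp add: partial_coding_Suc_0)
qed simp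

fun prefixes :: "nat \<Rightarrow> (real \<times> real) set" where
  "prefixes 0 = {0}"
| "prefixes (Suc m) = (\<lambda>(p, d). p + (1/2) ^ Suc m *\<^sub>R d) ` (prefixes m \<times> digits)"

lemma partial_coding_in_prefixes:
  assumes "\<forall>i. s i \<in> digits"
  shows "partial_coding m s 0 \<in> prefixes m"
proof (induction m)
  case (Suc m)
  then have "(partial_coding m s 0, s m) \<in> prefixes m \<times> digits" using assms by simp
  then show ?case
    unfolding prefixes.simps partial_coding_Suc_0 by (rule rev_image_eqI) simp
qed (simp add: partial_coding_def)

lemma compact_prefixes: "compact (prefixes m)"
proof (induction m)
  case (Suc m)
  have "continuous_on (prefixes m \<times> digits) (\<lambda>(p, d). p + (1/2::real) ^ Suc m *\<^sub>R d)"
    unfolding case_prod_unfold by (intro continuous_intros)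
  then show ?case
    using Suc by (simp only: prefixes.simps) (intro compact_continuous_image compact_Times compact_digits)
qed simp

lemma countable_prefixes: "countable (prefixes m)"
  by (induction m) (auto simp: countable_digits)

text \<open>Just below the dyadic level \<open>(j+1)/2^m\<close> the vertical digits \<open>m, \<dots>, m+n-1\<close> are all \<open>1\<close>,
  which forces the horizontal digits there to be \<open>0\<close>.\<close>
lemma fibre_below_dyadic_level:
  fixes j :: int
  assumes s: "\<forall>i. s i \<in> digits"
    and lo: "(j + 1) * 2 ^ n - 1 < snd (coding s) * 2 ^ (m + n)"
    and hi: "snd (coding s) * 2 ^ (m + n) < (j + 1) * 2 ^ n"
  shows "\<exists>a\<in>fst ` prefixes m. a \<le> fst (coding s) \<and> fst (coding s) \<le> a + (1/2) ^ (m + n)"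
proof -
  let ?y = "snd (coding s)"
  have scale: "?y * 2 ^ (m + n) = ?y * 2 ^ m * 2 ^ n" by (simp add: power_add)
  have "j * 2 ^ n \<le> (j + 1) * 2 ^ n - (1::real)"
    by (simp add: algebra_simps)
  then have "j * 2 ^ n < ?y * 2 ^ m * 2 ^ n" "?y * 2 ^ m * 2 ^ n < (j + 1) * 2 ^ n"
    using lo hi unfolding scale by linarith+
  then have "j < ?y * 2 ^ m" "?y * 2 ^ m < j + 1"
    by simp_all
  then have "height s m = j" by (intro height_eq_floor[OF s]) simp_all
  moreover have "height s (m + n) = (j + 1) * 2 ^ n - 1"
    using lo hi by (intro height_eq_floor[OF s]) simp_all
  ultimately have "\<forall>i\<in>{m..<m + n}. snd (s i) = 1"
    by (intro height_growth_eq[OF s]) simp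
  then have "fst (partial_coding (m + n) s 0) = fst (partial_coding m s 0)"
    by (rule fst_partial_coding_eq[OF s])
  moreover obtain t where t: "t \<in> {0..1} \<times> {0..1}"
    and eq: "coding s = partial_coding (m + n) s 0 + (1/2) ^ (m + n) *\<^sub>R t"
    using coding_eq_partial_coding[OF s] .
  ultimately have "fst (coding s) = fst (partial_coding m s 0) + (1/2) ^ (m + n) * fst t" by simp
  moreover have "0 \<le> (1/2) ^ (m + n) * fst t" "(1/2) ^ (m + n) * fst t \<le> (1/2) ^ (m + n)"
    using t by (auto intro: mult_left_le)
  moreover have "fst (partial_coding m s 0) \<in> fst ` prefixes m"
    using partial_coding_in_prefixes[OF s, of m] by (rule imageI)
  ultimately show ?thesis by force
qed

lemma mem_prefixes_if_below_dyadic_levels: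
  fixes j :: int
  assumes "\<And>n. (x, (j + 1 - (1/2) ^ Suc n) / 2 ^ m) \<in> coded_set"
  shows "x \<in> fst ` prefixes m"
proof -
  have "\<exists>a\<in>fst ` prefixes m. dist a x < \<epsilon>" if "\<epsilon> > 0" for \<epsilon>
  proof -
    obtain n where n: "(1/2::real) ^ n < \<epsilon>"
      using real_arch_pow_inv[of \<epsilon> "1/2"] \<open>\<epsilon> > 0\<close> by auto
    obtain s where s: "\<forall>i. s i \<in> digits" and xy: "(x, (j + 1 - (1/2) ^ Suc n) / 2 ^ m) = coding s"
      using assms[of n] unfolding coded_set_def by blast
    have "snd (coding s) * 2 ^ (m + n) = (j + 1) * 2 ^ n - 1/2"
      unfolding xy[symmetric] by (simp add: power_add field_simps)
    then obtain a where a: "a \<in> fst ` prefixes m" "a \<le> x" "x \<le> a + (1/2) ^ (m + n)"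
      using fibre_below_dyadic_level[OF s, of j n m] xy[symmetric] by auto
    moreover have "(1/2::real) ^ (m + n) \<le> (1/2) ^ n"
      by (simp add: power_decreasing)
    ultimately have "x - a < \<epsilon>"
      using n by linarith
    then have "dist a x < \<epsilon>"
      using a(2) by (simp add: dist_real_def)
    then show ?thesis using a(1) by blast
  qed
  moreover have "closed (fst ` prefixes m)"
    by (intro compact_imp_closed compact_continuous_image continuous_intros compact_prefixes)
  ultimately show ?thesis using closed_approachable by blast
qed

lemma interior_coded_set: "interior coded_set = {}"
proof (rule ccontr)
  assume "interior coded_set \<noteq> {}"
  then obtain z e where e: "e > 0" "ball z e \<subseteq> coded_set"
    by (metis all_not_in_conv mem_interior)
  obtain m where m: "(1/2::real) ^ m < e / 2"
    using real_arch_pow_inv[of "e/2" "1/2"] e by auto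
  define j where "j = \<lfloor>snd z * 2 ^ m\<rfloor>"
  have "{fst z - e/2<..<fst z + e/2} \<subseteq> fst ` prefixes m"
  proof
    fix x assume x: "x \<in> {fst z - e/2<..<fst z + e/2}"
    show "x \<in> fst ` prefixes m"
    proof (rule mem_prefixes_if_below_dyadic_levels)
      fix n
      define q where "q = (1/2::real) ^ Suc n"
      define y where "y = (j + 1 - q) / 2 ^ m"
      have "0 < q" "q < 1"
        unfolding q_def by (simp, rule power_Suc_less_one) simp_all
      moreover have "j \<le> snd z * 2 ^ m" "snd z * 2 ^ m < j + 1"
        unfolding j_def by linarith+
      moreover have "y * 2 ^ m = j + 1 - q"
        by (simp add: y_def)
      ultimately have "\<bar>y * 2 ^ m - snd z * 2 ^ m\<bar> < 1"
        by linarith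
      then have "\<bar>y - snd z\<bar> < (1/2) ^ m"
        by (simp add: abs_mult power_one_over pos_less_divide_eq flip: left_diff_distrib)
      moreover have "dist (x, y) z \<le> \<bar>x - fst z\<bar> + \<bar>y - snd z\<bar>"
        using norm_Pair_le[of "x - fst z" "y - snd z"] by (cases z) (simp add: dist_norm)
      moreover have "\<bar>x - fst z\<bar> < e / 2"
        unfolding abs_less_iff using x by auto
      ultimately have "dist (x, y) z < e"
        using m by linarith
      then show "(x, (j + 1 - (1/2) ^ Suc n) / 2 ^ m) \<in> coded_set"
        using e(2) by (auto simp: y_def q_def dist_commute)
    qed
  qed
  then have "countable {fst z - e/2<..<fst z + e/2}"
    by (rule countable_subset) (simp add: countable_prefixes)
  moreover have "fst z - e/2 < fst z + e/2" using e(1) by simp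
  ultimately show False using uncountable_open_interval by blast
qed

section \<open>Intervals in almost every fibre\<close>

definition doubling :: "real \<Rightarrow> real" where
  "doubling t = (if t < 1/2 then 2 * t else 2 * t - 1)"

definition digit_weight :: "real \<Rightarrow> real" where
  "digit_weight t = (if t < 1/2 then 1/2 else 1)"

fun weight :: "nat \<Rightarrow> real \<Rightarrow> real" where
  "weight 0 t = 1"
| "weight (Suc n) t = digit_weight t * weight n (doubling t)"

definition weight_sum :: "real \<Rightarrow> real" where
  "weight_sum t = (\<Sum>n. weight n t)"

text \<open>The exponent is chosen so that \<open>width (2t) = 8 width(t)\<^sup>2\<close> for \<open>t < 1/2\<close> and
  \<open>width (2t - 1) = 2 width t\<close> otherwise; these are exactly the widths that can be kept when a
  fibre interval is pulled back through the lower, respectively the upper, maps.\<close>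
definition width :: "real \<Rightarrow> real" where
  "width t = 2 powr (-1 - weight_sum t)"

definition fibre_region :: "(real \<times> real) set" where
  "fibre_region = {(x, y). 0 \<le> y \<and> y < 1 \<and> summable (\<lambda>n. weight n y) \<and> 0 \<le> x \<and> x \<le> width y}"

lemma weight_pos: "0 < weight n t"
  by (induction n arbitrary: t) (auto simp: digit_weight_def)

lemma weight_Suc_shift: "weight (Suc n) t / digit_weight t = weight n (doubling t)"
  by (simp add: digit_weight_def)

lemma summable_weight_doubling:
  assumes "summable (\<lambda>n. weight n t)"
  shows "summable (\<lambda>n. weight n (doubling t))"
proof -
  have "summable (\<lambda>n. weight (Suc n) t)"
    using assms by (rule summable_Suc_iff[THEN iffD2])
  then show ?thesis
    using summable_divide[of "\<lambda>n. weight (Suc n) t" "digit_weight t"] by (simp only: weight_Suc_shift)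
qed

lemma weight_sum_doubling:
  assumes "summable (\<lambda>n. weight n t)"
  shows "weight_sum t = 1 + digit_weight t * weight_sum (doubling t)"
proof -
  have "(\<Sum>n. weight (Suc n) t) = digit_weight t * weight_sum (doubling t)"
    unfolding weight_sum_def weight.simps by (rule suminf_mult[OF summable_weight_doubling[OF assms]])
  then show ?thesis
    using suminf_split_head[OF assms] unfolding weight_sum_def by simp
qed

lemma weight_sum_ge_1:
  assumes "summable (\<lambda>n. weight n t)"
  shows "1 \<le> weight_sum t"
proof -
  have "0 \<le> weight_sum (doubling t)"
    unfolding weight_sum_def
    by (intro suminf_nonneg summable_weight_doubling[OF assms]) (simp add: less_imp_le weight_pos)
  then show ?thesis
    using weight_sum_doubling[OF assms] by (simp add: digit_weight_def)
qed

lemma width_pos: "0 < width t"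
  by (simp add: width_def)

lemma width_le:
  assumes "summable (\<lambda>n. weight n t)"
  shows "width t \<le> 1/4"
proof -
  have "width t \<le> 2 powr (-2)"
    unfolding width_def using weight_sum_ge_1[OF assms] by (intro powr_mono) auto
  then show ?thesis by (simp add: powr_minus_divide)
qed

lemma width_doubling:
  assumes "summable (\<lambda>n. weight n t)"
  shows "width (doubling t) = (if t < 1/2 then 8 * width t ^ 2 else 2 * width t)"
proof -
  let ?u = "-1 - weight_sum t"
  have rec: "weight_sum t = 1 + digit_weight t * weight_sum (doubling t)"
    by (rule weight_sum_doubling[OF assms])
  show ?thesis
  proof (cases "t < 1/2")
    case True
    then have "-1 - weight_sum (doubling t) = 3 + 2 * ?u"
      using rec by (simp add: digit_weight_def)
    then have "width (doubling t) = 2 powr 3 * 2 powr (2 * ?u)"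
      unfolding width_def by (simp only: powr_add)
    also have "\<dots> = 8 * width t ^ 2"
      unfolding width_def using powr_power[of 2 ?u 2] by simp
    finally show ?thesis using True by simp
  next
    case False
    then have "-1 - weight_sum (doubling t) = 1 + ?u"
      using rec by (simp add: digit_weight_def)
    then have "width (doubling t) = 2 powr 1 * width t"
      unfolding width_def by (simp only: powr_add)
    then show ?thesis using False by simp
  qed
qed

text \<open>Take \<open>\<tau> = 1/\<lceil>1/u\<rceil>\<close>: then \<open>0 \<le> u - \<tau> < u \<tau> \<le> u\<^sup>2\<close>.\<close>
lemma offsets_approx_below:
  assumes "0 \<le> u"
  shows "\<exists>\<tau>\<in>offsets. 0 \<le> u - \<tau> \<and> u - \<tau> \<le> u\<^sup>2"
proof (cases "u = 0")
  case True
  then show ?thesis by (auto simp: offsets_def)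
next
  case False
  then have u: "0 < u" using assms by simp
  define M where "M = nat \<lceil>1 / u\<rceil>"
  have "real M = of_int \<lceil>1 / u\<rceil>"
    using u by (simp add: M_def)
  then have M1: "1 / u \<le> real M" and M2: "real M < 1 / u + 1"
    by linarith+
  have "0 < 1 / u" using u by simp
  then have "real M > 0" using M1 by linarith
  then have "1 / real M = 1 / real (Suc (M - 1))" by simp
  then have tau: "1 / real M \<in> offsets"
    unfolding offsets_def by (intro insertI2 range_eqI)
  have "1 \<le> u * real M" and "u * real M < 1 + u"
    using M1 M2 u by (simp_all add: field_simps)
  then have "0 \<le> u - 1 / real M"
    using \<open>real M > 0\<close> by (simp add: field_simps)
  moreover have "u - 1 / real M = (u * real M - 1) / real M"
    using \<open>real M > 0\<close> by (simp add: field_simps)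
  moreover have "(u * real M - 1) / real M \<le> u * (1 / real M)"
    using \<open>u * real M < 1 + u\<close> \<open>real M > 0\<close> by (simp add: divide_right_mono)
  moreover have "u * (1 / real M) \<le> u * u"
    using \<open>0 \<le> u - 1 / real M\<close> u by (intro mult_left_mono) auto
  ultimately have "u - 1 / real M \<le> u\<^sup>2"
    by (simp add: power2_eq_square)
  then show ?thesis
    using tau \<open>0 \<le> u - 1 / real M\<close> by blast
qed

lemma fibre_region_subset_hutch: "fibre_region \<subseteq> hutch fibre_region"
proof
  fix p assume "p \<in> fibre_region"
  then obtain x y where p: "p = (x, y)" and y: "0 \<le> y" "y < 1" and sum: "summable (\<lambda>n. weight n y)"
    and x: "0 \<le> x" "x \<le> width y"
    unfolding fibre_region_def by blast
  have sum': "summable (\<lambda>n. weight n (doubling y))" by (rule summable_weight_doubling[OF sum])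
  show "p \<in> hutch fibre_region"
  proof (cases "y < 1/2")
    case True
    obtain \<tau> where \<tau>: "\<tau> \<in> offsets" "0 \<le> 2 * x - \<tau>" "2 * x - \<tau> \<le> (2 * x)\<^sup>2"
      using offsets_approx_below[of "2 * x"] x by auto
    have "x\<^sup>2 \<le> (width y)\<^sup>2"
      using x by (intro power_mono)
    moreover have "(2 * x)\<^sup>2 = 4 * x\<^sup>2" "0 \<le> (width y)\<^sup>2"
      by (simp_all add: power_mult_distrib)
    ultimately have "(2 * x)\<^sup>2 \<le> 8 * width y ^ 2"
      by linarith
    then have "(2 * x - \<tau>, 2 * y) \<in> fibre_region"
      using True y sum' \<tau> width_doubling[OF sum] by (auto simp: fibre_region_def doubling_def)
    moreover have "(\<tau>, 0) \<in> digits" using \<tau> by (simp add: digits_def)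
    moreover have "p = midpoint (\<tau>, 0) (2 * x - \<tau>, 2 * y)" by (simp add: p midpoint_def inverse_eq_divide)
    ultimately show ?thesis unfolding mem_hutch_iff by blast
  next
    case False
    have "(2 * x, 2 * y - 1) \<in> fibre_region"
      using False y x sum' width_doubling[OF sum] by (auto simp: fibre_region_def doubling_def)
    moreover have "(0, 1) \<in> digits" by (simp add: digits_def)
    moreover have "p = midpoint (0, 1) (2 * x, 2 * y - 1)" by (simp add: p midpoint_def inverse_eq_divide)
    ultimately show ?thesis unfolding mem_hutch_iff by blast
  qed
qed

lemma fibre_region_subset_coded_set: "fibre_region \<subseteq> coded_set"
proof (rule subset_coded_set[OF _ fibre_region_subset_hutch])
  have "fibre_region \<subseteq> cbox (0, 0) (1, 1)"
    using width_le by (fastforce simp: fibre_region_def cbox_Pair_eq)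
  then show "bounded fibre_region" by (rule bounded_subset[OF bounded_cbox])
qed

lemma measurable_doubling [measurable]: "doubling \<in> borel_measurable borel"
  unfolding doubling_def by measurable

lemma measurable_digit_weight [measurable]: "digit_weight \<in> borel_measurable borel"
  unfolding digit_weight_def by measurable

lemma measurable_weight [measurable]: "weight n \<in> borel_measurable borel"
proof (induction n)
  case 0
  have "weight 0 = (\<lambda>t. 1)" by (simp add: fun_eq_iff)
  then show ?case by simp
next
  case (Suc n)
  have "weight (Suc n) = (\<lambda>t. digit_weight t * weight n (doubling t))" by (simp add: fun_eq_iff)
  then show ?case using Suc by simp
qed

lemma nn_integral_dilation:
  fixes f :: "real \<Rightarrow> ennreal"
  assumes [measurable]: "f \<in> borel_measurable borel"
  shows "(\<integral>\<^sup>+ t. f (2 * t - c) * indicator {c/2..<(c+1)/2} t \<partial>lborel)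
       = (\<integral>\<^sup>+ t. f t * indicator {0..<1} t \<partial>lborel) / 2"
proof -
  have "(\<integral>\<^sup>+ t. f t * indicator {0..<1} t \<partial>lborel)
      = ennreal \<bar>2\<bar> * (\<integral>\<^sup>+ t. f (- c + 2 * t) * indicator {0..<1} (- c + 2 * t) \<partial>lborel)"
    by (rule nn_integral_real_affine) auto
  also have "(\<lambda>t. f (- c + 2 * t) * indicator {0..<1} (- c + 2 * t))
           = (\<lambda>t. f (2 * t - c) * indicator {c/2..<(c+1)/2} t :: ennreal)"
    by (auto simp: fun_eq_iff indicator_def)
  finally have "(\<integral>\<^sup>+ t. f t * indicator {0..<1} t \<partial>lborel)
      = (\<integral>\<^sup>+ t. f (2 * t - c) * indicator {c/2..<(c+1)/2} t \<partial>lborel) * 2"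
    by (simp add: mult.commute)
  then show ?thesis
    by (simp add: ennreal_mult_divide_eq)
qed

lemma ennreal_half: "0 \<le> r \<Longrightarrow> ennreal r / 2 = ennreal (r / 2)"
  using divide_ennreal[of r 2] by simp

lemma weight_Suc_indicator:
  "ennreal (weight (Suc n) t) * indicator {0..<1} t
   = ennreal (weight n (2 * t)) * indicator {0..<1/2} t / 2
     + ennreal (weight n (2 * t - 1)) * indicator {1/2..<1} t"
  by (cases "t < 1/2")
    (auto simp: indicator_def digit_weight_def doubling_def ennreal_half weight_pos less_imp_le)

text \<open>Averaging over the two halves of \<open>[0,1)\<close> gives the factor \<open>1/2 \<cdot> 1/2 + 1/2 = 3/4\<close>.\<close>
lemma nn_integral_weight: "(\<integral>\<^sup>+ t. ennreal (weight n t) * indicator {0..<1} t \<partial>lborel) = ennreal ((3/4) ^ n)"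
proof (induction n)
  case (Suc n)
  have lower: "(\<integral>\<^sup>+ t. ennreal (weight n (2 * t)) * indicator {0..<1/2} t \<partial>lborel) = ennreal ((3/4) ^ n) / 2"
    using nn_integral_dilation[of "\<lambda>t. ennreal (weight n t)" 0] Suc by simp
  have upper: "(\<integral>\<^sup>+ t. ennreal (weight n (2 * t - 1)) * indicator {1/2..<1} t \<partial>lborel) = ennreal ((3/4) ^ n) / 2"
    using nn_integral_dilation[of "\<lambda>t. ennreal (weight n t)" 1] Suc by simp
  have "(\<integral>\<^sup>+ t. ennreal (weight (Suc n) t) * indicator {0..<1} t \<partial>lborel)
      = ennreal ((3/4) ^ n) / 2 / 2 + ennreal ((3/4) ^ n) / 2"
    unfolding weight_Suc_indicator by (simp add: nn_integral_add nn_integral_divide lower upper)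
  also have "\<dots> = ennreal ((3/4) ^ Suc n)"
    by (simp add: ennreal_half flip: ennreal_plus)
  finally show ?case .
qed simp

lemma AE_summable_weight: "AE y in lborel. y \<in> {0..<1} \<longrightarrow> summable (\<lambda>n. weight n y)"
proof -
  define g where "g y = (\<Sum>n. ennreal (weight n y) * indicator {0..<1} y)" for y :: real
  have "integral\<^sup>N lborel g = (\<Sum>n. (\<integral>\<^sup>+ y. ennreal (weight n y) * indicator {0..<1} y \<partial>lborel))"
    unfolding g_def by (rule nn_integral_suminf) simp
  also have "\<dots> = (\<Sum>n. ennreal ((3/4) ^ n))"
    by (simp only: nn_integral_weight)
  also have "\<dots> = ennreal 4"
    using geometric_sums[of "3/4::real"] by (intro suminf_ennreal_eq) auto
  finally have "integral\<^sup>N lborel g \<noteq> \<infinity>" by simp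
  then have "AE y in lborel. g y \<noteq> \<infinity>"
    by (intro nn_integral_noteq_infinite) (simp add: g_def)
  then show ?thesis
  proof (rule AE_mp, intro AE_I2 impI)
    fix y :: real assume "g y \<noteq> \<infinity>" and "y \<in> {0..<1}"
    then have "(\<Sum>n. ennreal (weight n y)) \<noteq> top" by (simp add: g_def)
    then show "summable (\<lambda>n. weight n y)"
      by (rule summable_suminf_not_top[rotated]) (simp add: less_imp_le weight_pos)
  qed
qed

section \<open>Positive measure\<close>

lemma emeasure_pos_if_AE_fibre_intervals:
  fixes S :: "(real \<times> real) set"
  assumes S: "S \<in> sets borel"
    and fibres: "AE y in lborel. y \<in> {0..1} \<longrightarrow> (\<exists>a b. a < b \<and> {a..b} \<subseteq> {x. (x, y) \<in> S})"
  shows "emeasure lborel S > 0"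
proof (rule ccontr)
  assume "\<not> emeasure lborel S > 0"
  then have "emeasure lborel S = 0" by (simp add: not_gr_zero)
  moreover have S': "S \<in> sets (lborel \<Otimes>\<^sub>M lborel)"
    unfolding lborel_prod using S by simp
  ultimately have "(\<integral>\<^sup>+ y. emeasure lborel ((\<lambda>x. (x, y)) -` S) \<partial>lborel) = 0"
    using lborel_pair.emeasure_pair_measure_alt2[OF S'] by (simp add: lborel_prod)
  then have "AE y in lborel. emeasure lborel ((\<lambda>x. (x, y)) -` S) = 0"
    by (subst (asm) nn_integral_0_iff_AE) (use lborel_pair.measurable_emeasure_Pair2[OF S'] in auto)
  with fibres have "AE y in lborel. y \<notin> {0..1::real}"
  proof eventually_elim
    case (elim y)
    show ?case
    proof
      assume "y \<in> {0..1}"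
      then obtain a b where ab: "a < b" "{a..b} \<subseteq> (\<lambda>x. (x, y)) -` S" using elim by auto
      have "(\<lambda>x::real. (x, y)) \<in> lborel \<rightarrow>\<^sub>M borel" by measurable
      from measurable_sets[OF this S] have "(\<lambda>x. (x, y)) -` S \<in> sets lborel"
        by simp
      then have "emeasure lborel {a..b} \<le> emeasure lborel ((\<lambda>x. (x, y)) -` S)"
        using ab(2) by (intro emeasure_mono)
      then show False using elim ab(1) by simp
    qed
  qed
  then have "emeasure lborel {0..1::real} = 0"
    by (subst (asm) AE_iff_measurable[of "{0..1}"]) auto
  then show False by simp
qed

lemma AE_fibre_interval:
  "AE y in lborel. y \<in> {0..1} \<longrightarrow> (\<exists>a b. a < b \<and> {a..b} \<subseteq> {x. (x, y) \<in> coded_set})"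
  using AE_summable_weight AE_lborel_singleton[of 1]
proof eventually_elim
  case (elim y)
  show ?case
  proof
    assume "y \<in> {0..1}"
    then have "{0..width y} \<subseteq> {x. (x, y) \<in> fibre_region}"
      using elim by (auto simp: fibre_region_def)
    then show "\<exists>a b. a < b \<and> {a..b} \<subseteq> {x. (x, y) \<in> coded_set}"
      using width_pos fibre_region_subset_coded_set by blast
  qed
qed

theorem theorem1:
  shows "emeasure lborel Kset > 0
       \<and> interior Kset = {}
       \<and> (AE y in lborel. y \<in> {0..1} \<longrightarrow>
            (\<exists>a b. a < b \<and> {a..b} \<subseteq> {x. (x, y) \<in> Kset}))"
proof (intro conjI)
  show fibres: "AE y in lborel. y \<in> {0..1} \<longrightarrow> (\<exists>a b. a < b \<and> {a..b} \<subseteq> {x. (x, y) \<in> Kset})"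
    unfolding Kset_eq_coded_set by (rule AE_fibre_interval)
  have "Kset \<in> sets borel"
    unfolding Kset_eq_coded_set using compact_coded_set by (simp add: compact_imp_closed)
  then show "emeasure lborel Kset > 0"
    using fibres by (rule emeasure_pos_if_AE_fibre_intervals)
  show "interior Kset = {}"
    unfolding Kset_eq_coded_set by (rule interior_coded_set)
qed

end
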